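(* Let $G$ be a connected bipartite graph with at least $3$ vertices. Then \[ \mathcal{H}_G=[1,\infty),\qquad [2,\infty)\subset\mathcal{H}^\phi_G\subset[1,\infty),\qquad \{1\}\cup[3,\infty)\subset\mathcal{H}^\psi_G\subset[1,\infty). \] If moreover $K_{2,2}\subset G\subset K_{2,m}$ for some $m\ge2$, then $\mathcal{H}^\phi_G=[2,\infty)$ and $\{1\}\cup[2,\infty)\subset\mathcal{H}^\psi_G\subset[1,\infty)$.
   Context: Graphs are finite and simple; $K_{a,b}$ is the complete bipartite graph, and $\subset$ between graphs means subgraph containment (up to isomorphism). For a graph $G$ on $\{1,\dots,n\}$ and $I\subset\mathbb{R}$, $\mathcal{P}_G(I)$ is the set of real symmetric PSD $n\times n$ matrices with entries in $I$ and $a_{ij}=0$ whenever $i\ne j$ and $(i,j)$ is not an edge; $\mathcal{P}_G=\mathcal{P}_G(\mathbb{R})$. $A^{\circ\alpha}=(a_{ij}^\alpha)$ with $0^\alpha:=0$; $\psi_\alpha(x)=\mathrm{sgn}(x)|x|^\alpha$, $\phi_\alpha(x)=|x|^\alpha$ ($x\ne0$), $\psi_\alpha(0)=\phi_\alpha(0)=0$, applied entrywise. $\mathcal{H}_G=\{\alpha\in\mathbb{R}:A^{\circ\alpha}\in\mathcal{P}_G\ \forall A\in\mathcal{P}_G([0,\infty))\}$, $\mathcal{H}_G^\psi=\{\alpha:\psi_\alpha[A]\in\mathcal{P}_G\ \forall A\in\mathcal{P}_G(\mathbb{R})\}$, $\mathcal{H}_G^\phi=\{\alpha:\phi_\alpha[A]\in\mathcal{P}_G\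 \forall A\in\mathcal{P}_G(\mathbb{R})\}$. *)

theory Defs
  imports Complex_Main
begin

text \<open>A finite simple graph on the vertex set {0..<n} (the paper uses {1..n}),
  given by its number of vertices and a symmetric irreflexive edge relation.\<close>
type_synonym graph = "nat \<times> (nat \<Rightarrow> nat \<Rightarrow> bool)"

definition nverts :: "graph \<Rightarrow> nat" where "nverts G = fst G"
definition adj :: "graph \<Rightarrow> nat \<Rightarrow> nat \<Rightarrow> bool" where "adj G = snd G"

definition simple_graph :: "graph \<Rightarrow> bool" where
  "simple_graph G \<longleftrightarrow> (\<forall>i j. adj G i j \<longrightarrow> i < nverts G \<and> j < nverts G \<and> i \<noteq> j \<and> adj G j i)"

definition connected_graph :: "graph \<Rightarrow> bool" where
  "connected_graph G \<longleftrightarrow> (\<forall>i j. i < nverts G \<and> j < nverts G \<longrightarrow> (adj G)\<^sup>*\<^sup>* i j)"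

definition bipartite_graph :: "graph \<Rightarrow> bool" where
  "bipartite_graph G \<longleftrightarrow> (\<exists>c :: nat \<Rightarrow> bool. \<forall>i j. adj G i j \<longrightarrow> c i \<noteq> c j)"

definition K_bip :: "nat \<Rightarrow> nat \<Rightarrow> graph" where
  "K_bip a b = (a + b, \<lambda>i j. i < a + b \<and> j < a + b \<and> ((i < a \<and> a \<le> j) \<or> (j < a \<and> a \<le> i)))"

definition subgraph_of :: "graph \<Rightarrow> graph \<Rightarrow> bool" where
  "subgraph_of H G \<longleftrightarrow> (\<exists>f. inj_on f {..<nverts H} \<and> f ` {..<nverts H} \<subseteq> {..<nverts G} \<and>
      (\<forall>i j. adj H i j \<longrightarrow> adj G (f i) (f j)))"

definition psd :: "nat \<Rightarrow> (nat \<Rightarrow> nat \<Rightarrow> real) \<Rightarrow> bool" where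
  "psd n A \<longleftrightarrow> (\<forall>i<n. \<forall>j<n. A i j = A j i) \<and>
     (\<forall>x :: nat \<Rightarrow> real. (\<Sum>i<n. \<Sum>j<n. x i * A i j * x j) \<ge> 0)"

definition PG :: "graph \<Rightarrow> real set \<Rightarrow> (nat \<Rightarrow> nat \<Rightarrow> real) set" where
  "PG G I = {A. psd (nverts G) A \<and> (\<forall>i<nverts G. \<forall>j<nverts G. A i j \<in> I) \<and>
      (\<forall>i<nverts G. \<forall>j<nverts G. i \<noteq> j \<and> \<not> adj G i j \<longrightarrow> A i j = 0)}"

definition psi_pow :: "real \<Rightarrow> real \<Rightarrow> real" where
  "psi_pow \<alpha> x = sgn x * \<bar>x\<bar> powr \<alpha>"

definition phi_pow :: "real \<Rightarrow> real \<Rightarrow> real" where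
  "phi_pow \<alpha> x = \<bar>x\<bar> powr \<alpha>"

text \<open>Note: 0 powr a = 0, matching the convention 0^alpha := 0.\<close>
definition HG :: "graph \<Rightarrow> real set" where
  "HG G = {\<alpha>. \<forall>A \<in> PG G {0..}. (\<lambda>i j. A i j powr \<alpha>) \<in> PG G UNIV}"

definition HG_psi :: "graph \<Rightarrow> real set" where
  "HG_psi G = {\<alpha>. \<forall>A \<in> PG G UNIV. (\<lambda>i j. psi_pow \<alpha> (A i j)) \<in> PG G UNIV}"

definition HG_phi :: "graph \<Rightarrow> real set" where
  "HG_phi G = {\<alpha>. \<forall>A \<in> PG G UNIV. (\<lambda>i j. phi_pow \<alpha> (A i j)) \<in> PG G UNIV}"

end

theory Submission
  imports Defs
begin

text \<open>
  Bipartite graphs are triangle-free. For a PSD matrix A whose pattern is triangle-free, the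
  2x2 minors give A_ij^2 \<le> A_ii A_jj, and testing A against e_i - \<Sum>_j (A_ij / A_jj) e_j, whose
  cross terms vanish for lack of triangles, gives \<Sum>_{j\<noteq>i} A_ij^2 / A_jj \<le> A_ii.
  For A \<ge> 0 and \<alpha> \<ge> 1 the minors give A_ij^\<alpha> \<le> A_ij s_i s_j with s_i = A_ii^((\<alpha>-1)/2), and with
  w_i = \<plusminus>s_i |x_i|, the sign flipped across the bipartition, x^T A^\<circ>\<alpha> x \<ge> w^T A w \<ge> 0.
  Conversely a connected graph on at least 3 vertices contains a path u v w, which carries a PSD
  matrix whose \<alpha>-th power, \<alpha> < 1, is not PSD, and a 4-cycle carries a PSD matrix whose image
  under \<phi>_\<alpha>, \<alpha> < 2, is not PSD.
\<close>

definition quad_form :: "nat \<Rightarrow> (nat \<Rightarrow> nat \<Rightarrow> real) \<Rightarrow> (nat \<Rightarrow> real) \<Rightarrow> real" where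
  "quad_form n A x = (\<Sum>i<n. \<Sum>j<n. x i * A i j * x j)"

lemma psd_iff_quad_form:
  "psd n A \<longleftrightarrow> (\<forall>i<n. \<forall>j<n. A i j = A j i) \<and> (\<forall>x. quad_form n A x \<ge> 0)"
  unfolding psd_def quad_form_def by simp

lemma quad_form_eq_sum_support:
  assumes "S \<subseteq> {..<n}"
    and "\<And>i j. i < n \<Longrightarrow> j < n \<Longrightarrow> i \<notin> S \<or> j \<notin> S \<Longrightarrow> x i * A i j * x j = 0"
  shows "quad_form n A x = (\<Sum>i\<in>S. \<Sum>j\<in>S. x i * A i j * x j)"
proof -
  have "quad_form n A x = (\<Sum>i\<in>S. \<Sum>j<n. x i * A i j * x j)"
    unfolding quad_form_def
    by (rule sum.mono_neutral_right) (use assms in \<open>auto intro!: sum.neutral\<close>)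
  also have "\<dots> = (\<Sum>i\<in>S. \<Sum>j\<in>S. x i * A i j * x j)"
    by (rule sum.cong[OF refl], rule sum.mono_neutral_right) (use assms in auto)
  finally show ?thesis .
qed

lemma nonneg_binary_quadratic_imp_discriminant_le:
  fixes p q r :: real
  assumes nonneg: "\<And>a b. 0 \<le> a * a * p + 2 * a * b * r + b * b * q"
  shows "r\<^sup>2 \<le> p * q"
proof (cases "q > 0")
  case True
  have "0 \<le> q * q * p + 2 * q * (- r) * r + (- r) * (- r) * q" by (rule nonneg)
  hence "0 \<le> q * (p * q - r\<^sup>2)" by (simp add: algebra_simps power2_eq_square)
  thus ?thesis using True by (simp add: zero_le_mult_iff)
next
  case False
  have q: "q = 0" using nonneg[of 0 1] False by simp
  show ?thesis
  proof (rule ccontr)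
    assume "\<not> r\<^sup>2 \<le> p * q"
    hence r: "r \<noteq> 0" using q by auto
    have "0 \<le> 1 * 1 * p + 2 * 1 * (- (p + 1) / (2 * r)) * r + (- (p + 1) / (2 * r)) * (- (p + 1) / (2 * r)) * q"
      by (rule nonneg)
    thus False using r q by (simp add: field_simps)
  qed
qed

lemma psd_diag_nonneg:
  assumes "psd n A" "i < n"
  shows "A i i \<ge> 0"
proof -
  have "0 \<le> quad_form n A (\<lambda>k. if k = i then 1 else 0)" using assms psd_iff_quad_form by blast
  also have "quad_form n A (\<lambda>k. if k = i then 1 else 0) = A i i"
    by (subst quad_form_eq_sum_support[of "{i}"]) (use assms in auto)
  finally show ?thesis .
qed

lemma psd_offdiag_square_le:
  assumes "psd n A" "i < n" "j < n" "i \<noteq> j"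
  shows "(A i j)\<^sup>2 \<le> A i i * A j j"
proof (rule nonneg_binary_quadratic_imp_discriminant_le)
  fix a b :: real
  define x where "x k = (if k = i then a else if k = j then b else 0)" for k
  have "A j i = A i j" using assms unfolding psd_def by auto
  hence "quad_form n A x = a * a * A i i + 2 * a * b * A i j + b * b * A j j"
    unfolding x_def by (subst quad_form_eq_sum_support[of "{i, j}"]) (use assms in \<open>auto simp: algebra_simps\<close>)
  thus "0 \<le> a * a * A i i + 2 * a * b * A i j + b * b * A j j"
    using assms psd_iff_quad_form by metis
qed

lemma psd_diag_pos_if_offdiag_nonzero:
  assumes "psd n A" "i < n" "j < n" "i \<noteq> j" "A i j \<noteq> 0"
  shows "A i i > 0" "A j j > 0"
proof -
  have "0 < (A i j)\<^sup>2" using assms(5) by simp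
  also have "\<dots> \<le> A i i * A j j" using psd_offdiag_square_le assms by blast
  finally have "0 < A i i * A j j" .
  thus "A i i > 0" "A j j > 0"
    using psd_diag_nonneg[OF assms(1,2)] psd_diag_nonneg[OF assms(1,3)]
    by (auto simp: zero_less_mult_iff)
qed

lemma abs_mult_le_weighted_squares:
  fixes r r' x y :: real
  assumes "r > 0" "r * r' = 1"
  shows "2 * \<bar>x * y\<bar> \<le> r * x\<^sup>2 + r' * y\<^sup>2"
proof -
  have r': "r' = 1 / r" using assms by (simp add: field_simps)
  have "0 \<le> (r * \<bar>x\<bar> - \<bar>y\<bar>)\<^sup>2" by simp
  hence "2 * r * \<bar>x * y\<bar> \<le> r * (r * x\<^sup>2) + y\<^sup>2"
    by (simp add: power2_eq_square algebra_simps abs_mult)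
  hence "r * (2 * \<bar>x * y\<bar>) \<le> r * (r * x\<^sup>2 + r' * y\<^sup>2)"
    using assms r' by (simp add: algebra_simps)
  thus ?thesis using assms(1) by simp
qed

text \<open>Diagonal dominance of D B D^-1 for a positive diagonal D, stated through r_ij = d_i / d_j.\<close>

lemma quad_form_nonneg_if_scaled_diag_dominant:
  fixes B r :: "nat \<Rightarrow> nat \<Rightarrow> real"
  assumes sym: "\<And>i j. i < n \<Longrightarrow> j < n \<Longrightarrow> B i j = B j i"
    and r_pos: "\<And>i j. r i j > 0" and r_recip: "\<And>i j. r i j * r j i = 1"
    and dominant: "\<And>i. i < n \<Longrightarrow> (\<Sum>j<n. if j = i then 0 else \<bar>B i j\<bar> * r i j) \<le> B i i"
  shows "quad_form n B x \<ge> 0"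
proof -
  define h where "h i j = (if i = j then 0 else \<bar>B i j\<bar> * r i j * (x i)\<^sup>2)" for i j
  define lower where "lower i j = (if i = j then B i i * (x i)\<^sup>2 else 0) - (h i j + h j i) / 2" for i j
  have entry: "lower i j \<le> x i * B i j * x j" if "i < n" "j < n" for i j
  proof (cases "i = j")
    case True
    thus ?thesis by (simp add: lower_def h_def power2_eq_square)
  next
    case False
    have "\<bar>B i j\<bar> * (2 * \<bar>x i * x j\<bar>) \<le> \<bar>B i j\<bar> * (r i j * (x i)\<^sup>2 + r j i * (x j)\<^sup>2)"
      using abs_mult_le_weighted_squares[OF r_pos r_recip] by (rule mult_left_mono) simp
    moreover have "- (x i * B i j * x j) \<le> \<bar>B i j\<bar> * \<bar>x i * x j\<bar>"
      by (metis abs_ge_minus_self abs_mult mult.commute mult.left_commute)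
    ultimately have "- (\<bar>B i j\<bar> * (r i j * (x i)\<^sup>2 + r j i * (x j)\<^sup>2)) / 2 \<le> x i * B i j * x j"
      by linarith
    moreover have "lower i j = - (\<bar>B i j\<bar> * (r i j * (x i)\<^sup>2 + r j i * (x j)\<^sup>2)) / 2"
      using False sym[OF that] by (simp add: lower_def h_def algebra_simps)
    ultimately show ?thesis by simp
  qed
  have row: "(\<Sum>j<n. h i j) \<le> B i i * (x i)\<^sup>2" if "i < n" for i
  proof -
    have "(\<Sum>j<n. h i j) = (x i)\<^sup>2 * (\<Sum>j<n. if j = i then 0 else \<bar>B i j\<bar> * r i j)"
      by (simp add: h_def sum_distrib_left) (intro sum.cong refl, auto)
    also have "\<dots> \<le> (x i)\<^sup>2 * B i i" using dominant that by (intro mult_left_mono) auto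
    finally show ?thesis by (simp add: mult.commute)
  qed
  have "0 \<le> (\<Sum>i<n. B i i * (x i)\<^sup>2) - (\<Sum>i<n. \<Sum>j<n. h i j)"
    using sum_mono[of "{..<n}", OF row] by simp
  also have "\<dots> = (\<Sum>i<n. \<Sum>j<n. lower i j)"
    using sum.swap[of "\<lambda>i j. h j i" "{..<n}" "{..<n}"]
    by (simp add: lower_def sum_subtractf sum.distrib sum_divide_distrib[symmetric])
  also have "\<dots> \<le> quad_form n B x"
    unfolding quad_form_def by (intro sum_mono entry) auto
  finally show ?thesis .
qed

lemma abs_powr_le_mult_powr_half:
  fixes a p q \<gamma> :: real
  assumes "a\<^sup>2 \<le> p * q" "0 \<le> \<gamma>"
  shows "\<bar>a\<bar> powr \<gamma> \<le> (p * q) powr (\<gamma> / 2)"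
proof (cases "a = 0")
  case False
  have "\<bar>a\<bar> powr \<gamma> = (\<bar>a\<bar> powr 2) powr (\<gamma> / 2)"
    unfolding powr_powr by simp
  also have "\<dots> = (a\<^sup>2) powr (\<gamma> / 2)"
    using False by (simp add: powr_numeral)
  also have "\<dots> \<le> (p * q) powr (\<gamma> / 2)"
    using assms by (intro powr_mono2) auto
  finally show ?thesis .
qed simp

lemma powr_le_mult_geometric_mean_powr:
  fixes a p q \<alpha> :: real
  assumes "a\<^sup>2 \<le> p * q" "0 \<le> a" "0 \<le> p" "0 \<le> q" "1 \<le> \<alpha>"
  shows "a powr \<alpha> \<le> a * p powr ((\<alpha> - 1) / 2) * q powr ((\<alpha> - 1) / 2)"
proof (cases "a = 0")
  case False
  have "a powr \<alpha> = a * a powr (\<alpha> - 1)"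
    using False assms(2) by (simp add: powr_diff)
  also have "\<dots> \<le> a * (p * q) powr ((\<alpha> - 1) / 2)"
    using abs_powr_le_mult_powr_half[of a p q "\<alpha> - 1"] assms by (intro mult_left_mono) auto
  finally show ?thesis using assms by (simp add: powr_mult)
qed simp

lemma abs_powr_mult_ratio_powr_le:
  fixes a p q \<alpha> :: real
  assumes "a\<^sup>2 \<le> p * q" "0 < p" "0 < q" "2 \<le> \<alpha>"
  shows "\<bar>a\<bar> powr \<alpha> * (p / q) powr (\<alpha> / 2) \<le> p powr (\<alpha> - 1) * (a\<^sup>2 / q)"
proof (cases "a = 0")
  case False
  have "\<bar>a\<bar> powr \<alpha> = a\<^sup>2 * \<bar>a\<bar> powr (\<alpha> - 2)"
    using False by (simp add: powr_diff powr_realpow[symmetric])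
  also have "\<dots> \<le> a\<^sup>2 * (p * q) powr ((\<alpha> - 2) / 2)"
    using abs_powr_le_mult_powr_half[of a p q "\<alpha> - 2"] assms by (intro mult_left_mono) auto
  finally have "\<bar>a\<bar> powr \<alpha> * (p / q) powr (\<alpha> / 2) \<le> a\<^sup>2 * (p * q) powr ((\<alpha> - 2) / 2) * (p / q) powr (\<alpha> / 2)"
    by (rule mult_right_mono) simp
  also have "\<dots> = a\<^sup>2 * ((p * q) powr ((\<alpha> - 2) / 2) * (p / q) powr (\<alpha> / 2))"
    by simp
  also have "(p * q) powr ((\<alpha> - 2) / 2) * (p / q) powr (\<alpha> / 2)
      = (p powr ((\<alpha> - 2) / 2) * p powr (\<alpha> / 2)) * (q powr ((\<alpha> - 2) / 2) / q powr (\<alpha> / 2))"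
    using assms by (simp add: powr_mult powr_divide)
  also have "p powr ((\<alpha> - 2) / 2) * p powr (\<alpha> / 2) = p powr (\<alpha> - 1)"
    unfolding powr_add[symmetric] by (rule arg_cong[where f = "(powr) p"]) (simp add: field_simps)
  also have "q powr ((\<alpha> - 2) / 2) / q powr (\<alpha> / 2) = q powr (- 1)"
    unfolding powr_diff[symmetric] by (rule arg_cong[where f = "(powr) q"]) (simp add: field_simps)
  finally show ?thesis using assms by (simp add: powr_minus_divide mult.commute)
qed simp

lemma double_sum_star_indicators:
  fixes c :: real and k :: "nat \<Rightarrow> real"
  assumes "i < n"
  shows "(\<Sum>p<n. \<Sum>q<n. (if p = i \<and> q = i then c else 0) - (if p = i then k q else 0)
      - (if q = i then k p else 0) + (if p = q then k p else 0)) = c - (\<Sum>q<n. k q)"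
proof -
  have "(\<Sum>p<n. \<Sum>q<n. if p = i \<and> q = i then c else 0) = (\<Sum>p<n. if p = i then c else 0)"
    by (intro sum.cong refl) (use assms in auto)
  moreover have "(\<Sum>p<n. \<Sum>q<n. if p = i then k q else 0) = (\<Sum>p<n. if p = i then (\<Sum>q<n. k q) else 0)"
    by (intro sum.cong refl) auto
  ultimately show ?thesis
    using assms by (simp only: sum.distrib sum_subtractf) simp
qed

lemma psd_triangle_free_row_bound:
  fixes A :: "nat \<Rightarrow> nat \<Rightarrow> real" and E :: "nat \<Rightarrow> nat \<Rightarrow> bool"
  assumes psd: "psd n A"
    and support: "\<And>i j. i < n \<Longrightarrow> j < n \<Longrightarrow> i \<noteq> j \<Longrightarrow> A i j \<noteq> 0 \<Longrightarrow> E i j"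
    and triangle_free: "\<And>i p q. \<not> (E i p \<and> E i q \<and> E p q)"
    and i: "i < n"
  shows "(\<Sum>j<n. if j = i then 0 else (A i j)\<^sup>2 / A j j) \<le> A i i"
proof -
  have sym: "A p q = A q p" if "p < n" "q < n" for p q using psd that unfolding psd_def by auto
  define x where "x k = (if k = i then 1 else - (A i k / A k k))" for k
  define k where "k p = (if p = i then 0 else (A i p)\<^sup>2 / A p p)" for p
  have entry: "x p * A p q * x q = (if p = i \<and> q = i then A i i else 0) - (if p = i then k q else 0)
      - (if q = i then k p else 0) + (if p = q then k p else 0)" if p: "p < n" and q: "q < n" for p q
  proof -
    consider "p = i" "q = i" | "p = i" "q \<noteq> i" | "p \<noteq> i" "q = i" | "p \<noteq> i" "q \<noteq> i" "p = q"
      | "p \<noteq> i" "q \<noteq> i" "p \<noteq> q" by blast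
    thus ?thesis
    proof cases
      case 1 thus ?thesis by (simp add: x_def k_def)
    next
      case 2 thus ?thesis by (simp add: x_def k_def power2_eq_square)
    next
      case 3 thus ?thesis using sym[OF p i] by (simp add: x_def k_def power2_eq_square)
    next
      case 4 thus ?thesis by (cases "A p p = 0") (simp_all add: x_def k_def power2_eq_square)
    next
      case 5
      have "A i p = 0 \<or> A i q = 0 \<or> A p q = 0"
        using support[OF i p] support[OF i q] support[OF p q] 5 triangle_free by metis
      thus ?thesis using 5 by (auto simp: x_def k_def)
    qed
  qed
  have "0 \<le> quad_form n A x" using psd psd_iff_quad_form by blast
  also have "quad_form n A x = A i i - (\<Sum>q<n. k q)"
    unfolding quad_form_def double_sum_star_indicators[OF i, symmetric]
    by (intro sum.cong refl entry) auto
  finally show ?thesis unfolding k_def by simp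
qed

text \<open>The ratios d_i / d_j for d_i = A_ii^(\<alpha>/2); the value 1 where a diagonal entry vanishes is
  arbitrary, since such rows and columns of A are zero.\<close>

definition diag_ratio_weight :: "(nat \<Rightarrow> nat \<Rightarrow> real) \<Rightarrow> real \<Rightarrow> nat \<Rightarrow> nat \<Rightarrow> real" where
  "diag_ratio_weight A \<alpha> i j = (if A i i > 0 \<and> A j j > 0 then (A i i / A j j) powr (\<alpha> / 2) else 1)"

lemma diag_ratio_weight_pos: "diag_ratio_weight A \<alpha> i j > 0"
  by (simp add: diag_ratio_weight_def)

lemma diag_ratio_weight_recip: "diag_ratio_weight A \<alpha> i j * diag_ratio_weight A \<alpha> j i = 1"
  by (auto simp: diag_ratio_weight_def powr_mult[symmetric])

lemma psd_triangle_free_weighted_powr_row_bound: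
  fixes A :: "nat \<Rightarrow> nat \<Rightarrow> real" and E :: "nat \<Rightarrow> nat \<Rightarrow> bool"
  assumes psd: "psd n A"
    and support: "\<And>i j. i < n \<Longrightarrow> j < n \<Longrightarrow> i \<noteq> j \<Longrightarrow> A i j \<noteq> 0 \<Longrightarrow> E i j"
    and triangle_free: "\<And>i p q. \<not> (E i p \<and> E i q \<and> E p q)"
    and \<alpha>: "2 \<le> \<alpha>" and i: "i < n"
  shows "(\<Sum>j<n. if j = i then 0 else \<bar>A i j\<bar> powr \<alpha> * diag_ratio_weight A \<alpha> i j) \<le> A i i powr \<alpha>"
proof -
  have "(\<Sum>j<n. if j = i then 0 else \<bar>A i j\<bar> powr \<alpha> * diag_ratio_weight A \<alpha> i j)
      \<le> (\<Sum>j<n. A i i powr (\<alpha> - 1) * (if j = i then 0 else (A i j)\<^sup>2 / A j j))"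
  proof (rule sum_mono)
    fix j assume j: "j \<in> {..<n}"
    show "(if j = i then 0 else \<bar>A i j\<bar> powr \<alpha> * diag_ratio_weight A \<alpha> i j)
        \<le> A i i powr (\<alpha> - 1) * (if j = i then 0 else (A i j)\<^sup>2 / A j j)"
    proof (cases "j = i \<or> A i j = 0")
      case False
      hence ji: "j \<noteq> i" and "A i j \<noteq> 0" by auto
      hence pos: "A i i > 0" "A j j > 0"
        using psd_diag_pos_if_offdiag_nonzero[OF psd i, of j] j by auto
      have "\<bar>A i j\<bar> powr \<alpha> * (A i i / A j j) powr (\<alpha> / 2) \<le> A i i powr (\<alpha> - 1) * ((A i j)\<^sup>2 / A j j)"
        using psd_offdiag_square_le[OF psd i, of j] ji j pos \<alpha>
        by (intro abs_powr_mult_ratio_powr_le) auto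
      thus ?thesis using ji pos by (simp add: diag_ratio_weight_def)
    qed auto
  qed
  also have "\<dots> = A i i powr (\<alpha> - 1) * (\<Sum>j<n. if j = i then 0 else (A i j)\<^sup>2 / A j j)"
    by (simp add: sum_distrib_left)
  also have "\<dots> \<le> A i i powr (\<alpha> - 1) * A i i"
    by (rule mult_left_mono[OF psd_triangle_free_row_bound[OF psd support triangle_free i]]) auto
  also have "\<dots> = A i i powr \<alpha>"
    using psd_diag_nonneg[OF psd i] \<alpha> by (cases "A i i = 0") (simp_all add: powr_diff)
  finally show ?thesis .
qed

lemma psd_entrywise_powr_triangle_free:
  fixes A B :: "nat \<Rightarrow> nat \<Rightarrow> real" and E :: "nat \<Rightarrow> nat \<Rightarrow> bool"
  assumes psd: "psd n A"
    and support: "\<And>i j. i < n \<Longrightarrow> j < n \<Longrightarrow> i \<noteq> j \<Longrightarrow> A i j \<noteq> 0 \<Longrightarrow> E i j"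
    and triangle_free: "\<And>i p q. \<not> (E i p \<and> E i q \<and> E p q)"
    and \<alpha>: "2 \<le> \<alpha>"
    and B_sym: "\<And>i j. i < n \<Longrightarrow> j < n \<Longrightarrow> B i j = B j i"
    and B_abs: "\<And>i j. i < n \<Longrightarrow> j < n \<Longrightarrow> \<bar>B i j\<bar> = \<bar>A i j\<bar> powr \<alpha>"
    and B_diag: "\<And>i. i < n \<Longrightarrow> B i i = A i i powr \<alpha>"
  shows "psd n B"
proof -
  have "(\<Sum>j<n. if j = i then 0 else \<bar>B i j\<bar> * diag_ratio_weight A \<alpha> i j) \<le> B i i" if i: "i < n" for i
  proof -
    have "(\<Sum>j<n. if j = i then 0 else \<bar>B i j\<bar> * diag_ratio_weight A \<alpha> i j)
        = (\<Sum>j<n. if j = i then 0 else \<bar>A i j\<bar> powr \<alpha> * diag_ratio_weight A \<alpha> i j)"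
      using B_abs[OF i] by (intro sum.cong refl) auto
    also have "\<dots> \<le> B i i"
      using psd_triangle_free_weighted_powr_row_bound[of n A E, OF psd support triangle_free \<alpha> i]
      by (simp add: B_diag[OF i])
    finally show ?thesis .
  qed
  hence "quad_form n B x \<ge> 0" for x
    by (intro quad_form_nonneg_if_scaled_diag_dominant[OF B_sym diag_ratio_weight_pos diag_ratio_weight_recip])
  thus ?thesis unfolding psd_iff_quad_form using B_sym by blast
qed

lemma bipartite_sign_flip_term_le:
  fixes A :: "nat \<Rightarrow> nat \<Rightarrow> real" and c :: "nat \<Rightarrow> bool"
  assumes psd: "psd n A"
    and nonneg: "\<And>i j. i < n \<Longrightarrow> j < n \<Longrightarrow> A i j \<ge> 0"
    and support: "\<And>i j. i < n \<Longrightarrow> j < n \<Longrightarrow> i \<noteq> j \<Longrightarrow> A i j \<noteq> 0 \<Longrightarrow> c i \<noteq> c j"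
    and \<alpha>: "1 \<le> \<alpha>" and i: "i < n" and j: "j < n"
    and s_def: "s \<equiv> \<lambda>k. A k k powr ((\<alpha> - 1) / 2)"
    and e_def: "e \<equiv> \<lambda>k. if c k then 1 else - 1 :: real"
  shows "(s i * e i * \<bar>x i\<bar>) * A i j * (s j * e j * \<bar>x j\<bar>) \<le> x i * A i j powr \<alpha> * x j"
proof (cases "i = j")
  case True
  have diag: "s i * s i * A i i = A i i powr \<alpha>"
  proof (cases "A i i = 0")
    case False
    hence "A i i powr 1 = A i i" using psd_diag_nonneg[OF psd i] by simp
    hence "s i * s i * A i i = A i i powr ((\<alpha> - 1) / 2 + (\<alpha> - 1) / 2 + 1)"
      unfolding s_def powr_add by simp
    thus ?thesis by simp
  qed (simp add: s_def)
  have signs: "e i * e i = 1" by (simp add: e_def)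
  have "(s i * e i * \<bar>x i\<bar>) * A i j * (s j * e j * \<bar>x j\<bar>)
      = (s i * s i * A i i) * (e i * e i) * (\<bar>x i\<bar> * \<bar>x i\<bar>)"
    using True by (simp add: algebra_simps)
  also have "\<dots> = x i * A i j powr \<alpha> * x j"
    unfolding diag signs using True by (simp add: abs_mult_self_eq algebra_simps)
  finally show ?thesis by simp
next
  case False
  show ?thesis
  proof (cases "A i j = 0")
    case nonzero: False
    have signs: "e i * e j = -1" using support[OF i j False nonzero] by (auto simp: e_def)
    have bound: "A i j powr \<alpha> \<le> A i j * s i * s j"
      unfolding s_def using psd_offdiag_square_le[OF psd i j False] nonneg[OF i j]
        psd_diag_nonneg[OF psd i] psd_diag_nonneg[OF psd j] \<alpha>
      by (intro powr_le_mult_geometric_mean_powr) auto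
    have "(s i * e i * \<bar>x i\<bar>) * A i j * (s j * e j * \<bar>x j\<bar>) = (e i * e j) * (A i j * s i * s j) * \<bar>x i * x j\<bar>"
      by (simp add: abs_mult algebra_simps)
    also have "\<dots> \<le> - (A i j powr \<alpha>) * \<bar>x i * x j\<bar>"
      unfolding signs using bound by (intro mult_right_mono) auto
    also have "\<dots> \<le> x i * A i j powr \<alpha> * x j"
    proof -
      have "A i j powr \<alpha> * (- (x i * x j)) \<le> A i j powr \<alpha> * \<bar>x i * x j\<bar>"
        by (intro mult_left_mono) auto
      thus ?thesis by (simp add: algebra_simps)
    qed
    finally show ?thesis .
  qed simp
qed

lemma psd_entrywise_powr_bipartite_nonneg:
  fixes A :: "nat \<Rightarrow> nat \<Rightarrow> real" and c :: "nat \<Rightarrow> bool"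
  assumes psd: "psd n A"
    and nonneg: "\<And>i j. i < n \<Longrightarrow> j < n \<Longrightarrow> A i j \<ge> 0"
    and support: "\<And>i j. i < n \<Longrightarrow> j < n \<Longrightarrow> i \<noteq> j \<Longrightarrow> A i j \<noteq> 0 \<Longrightarrow> c i \<noteq> c j"
    and \<alpha>: "1 \<le> \<alpha>"
  shows "psd n (\<lambda>i j. A i j powr \<alpha>)"
proof -
  have "quad_form n (\<lambda>i j. A i j powr \<alpha>) x \<ge> 0" for x
  proof -
    define w where "w k = A k k powr ((\<alpha> - 1) / 2) * (if c k then 1 else - 1) * \<bar>x k\<bar>" for k
    have "0 \<le> quad_form n A w" using psd psd_iff_quad_form by blast
    also have "\<dots> \<le> quad_form n (\<lambda>i j. A i j powr \<alpha>) x"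
      unfolding quad_form_def w_def
      by (intro sum_mono bipartite_sign_flip_term_le[OF psd nonneg support \<alpha>]) auto
    finally show ?thesis .
  qed
  thus ?thesis using psd unfolding psd_iff_quad_form by simp
qed

text \<open>\<surd>2 I plus the adjacency matrix of the path u v w, whose largest eigenvalue is \<surd>2:
  a power \<alpha> < 1 shrinks the diagonal below \<surd>2 but keeps the off-diagonal ones.\<close>

definition path3_matrix :: "nat \<Rightarrow> nat \<Rightarrow> nat \<Rightarrow> nat \<Rightarrow> nat \<Rightarrow> real" where
  "path3_matrix u v w i j =
     (if i = j then (if i \<in> {u, v, w} then sqrt 2 else 0)
      else if {i, j} = {u, v} \<or> {i, j} = {v, w} then 1 else 0)"

lemma path3_matrix_entries:
  assumes "distinct [u, v, w]"
  shows "path3_matrix u v w u u = sqrt 2" "path3_matrix u v w v v = sqrt 2" "path3_matrix u v w w w = sqrt 2"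
    "path3_matrix u v w u v = 1" "path3_matrix u v w v u = 1"
    "path3_matrix u v w v w = 1" "path3_matrix u v w w v = 1"
    "path3_matrix u v w u w = 0" "path3_matrix u v w w u = 0"
  using assms unfolding path3_matrix_def by (simp_all add: doubleton_eq_iff)

lemma path3_matrix_outside:
  assumes "i \<notin> {u, v, w} \<or> j \<notin> {u, v, w}"
  shows "path3_matrix u v w i j = 0"
proof -
  have "{i, j} \<noteq> {u, v}" "{i, j} \<noteq> {v, w}" using assms by blast+
  thus ?thesis using assms unfolding path3_matrix_def by auto
qed

lemma path3_matrix_nonneg: "path3_matrix u v w i j \<ge> 0"
  by (simp add: path3_matrix_def)

lemma path3_matrix_offdiag_nonzero:
  assumes "i \<noteq> j" "path3_matrix u v w i j \<noteq> 0"
  shows "{i, j} = {u, v} \<or> {i, j} = {v, w}"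
proof (rule ccontr)
  assume "\<not> ?thesis"
  hence "path3_matrix u v w i j = 0" using assms(1) unfolding path3_matrix_def by simp
  thus False using assms(2) by contradiction
qed

lemma quad_form_path3_matrix:
  fixes f :: "real \<Rightarrow> real"
  assumes "distinct [u, v, w]" "u < n" "v < n" "w < n" "f 0 = 0"
  shows "quad_form n (\<lambda>i j. f (path3_matrix u v w i j)) x
    = f (sqrt 2) * ((x u)\<^sup>2 + (x v)\<^sup>2 + (x w)\<^sup>2) + 2 * f 1 * (x u * x v + x v * x w)"
proof -
  have "quad_form n (\<lambda>i j. f (path3_matrix u v w i j)) x
      = (\<Sum>i\<in>{u, v, w}. \<Sum>j\<in>{u, v, w}. x i * f (path3_matrix u v w i j) * x j)"
    using assms path3_matrix_outside by (intro quad_form_eq_sum_support) auto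
  thus ?thesis
    using assms(1,5) by (simp add: path3_matrix_entries algebra_simps power2_eq_square)
qed

lemma psd_path3_matrix:
  assumes "distinct [u, v, w]" "u < n" "v < n" "w < n"
  shows "psd n (path3_matrix u v w)"
  unfolding psd_iff_quad_form
proof (intro conjI allI impI)
  fix i j show "path3_matrix u v w i j = path3_matrix u v w j i"
    unfolding path3_matrix_def by (simp add: insert_commute)
next
  fix x
  have "sqrt 2 * quad_form n (path3_matrix u v w) x = (sqrt 2 * x v + x u + x w)\<^sup>2 + (x u - x w)\<^sup>2"
    using quad_form_path3_matrix[OF assms, where f = "\<lambda>t. t"] by (simp add: algebra_simps power2_eq_square)
  hence "0 \<le> sqrt 2 * quad_form n (path3_matrix u v w) x" by simp
  thus "0 \<le> quad_form n (path3_matrix u v w) x" by (simp add: zero_le_mult_iff)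
qed

lemma path3_matrix_powr_not_psd:
  assumes "distinct [u, v, w]" "u < n" "v < n" "w < n" "\<alpha> < 1"
  shows "\<not> psd n (\<lambda>i j. path3_matrix u v w i j powr \<alpha>)"
proof -
  define D where "D = sqrt 2 powr \<alpha>"
  have "0 < D" "D < sqrt 2"
    using powr_less_mono[OF \<open>\<alpha> < 1\<close>, of "sqrt 2"] by (simp_all add: D_def)
  hence "D * D < sqrt 2 * sqrt 2" by (intro mult_strict_mono) auto
  define x where "x i = (if i = v then 2 else - D)" for i
  have "quad_form n (\<lambda>i j. path3_matrix u v w i j powr \<alpha>) x = 2 * D * (D * D - 2)"
    using quad_form_path3_matrix[OF assms(1-4), where f = "\<lambda>t. t powr \<alpha>"] assms(1)
    by (simp add: x_def D_def[symmetric] algebra_simps power2_eq_square)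
  also have "\<dots> < 0" using \<open>0 < D\<close> \<open>D * D < sqrt 2 * sqrt 2\<close> by (simp add: mult_pos_neg)
  finally show ?thesis unfolding psd_iff_quad_form by (meson not_le)
qed

text \<open>\<surd>2 I plus a 4-cycle a c b d with the single negative edge b d (adjacency eigenvalues \<plusminus>\<surd>2);
  \<phi>_\<alpha> erases the sign, and the unsigned 4-cycle has eigenvalue 2 > \<surd>2^\<alpha>.\<close>

definition cycle4_matrix :: "nat \<Rightarrow> nat \<Rightarrow> nat \<Rightarrow> nat \<Rightarrow> nat \<Rightarrow> nat \<Rightarrow> real" where
  "cycle4_matrix a b c d i j =
     (if i = j then (if i \<in> {a, b, c, d} then sqrt 2 else 0)
      else if {i, j} = {a, c} \<or> {i, j} = {a, d} \<or> {i, j} = {b, c} then 1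
      else if {i, j} = {b, d} then -1 else 0)"

lemma cycle4_matrix_entries:
  assumes "distinct [a, b, c, d]"
  shows "cycle4_matrix a b c d a a = sqrt 2" "cycle4_matrix a b c d b b = sqrt 2"
    "cycle4_matrix a b c d c c = sqrt 2" "cycle4_matrix a b c d d d = sqrt 2"
    "cycle4_matrix a b c d a c = 1" "cycle4_matrix a b c d c a = 1"
    "cycle4_matrix a b c d a d = 1" "cycle4_matrix a b c d d a = 1"
    "cycle4_matrix a b c d b c = 1" "cycle4_matrix a b c d c b = 1"
    "cycle4_matrix a b c d b d = -1" "cycle4_matrix a b c d d b = -1"
    "cycle4_matrix a b c d a b = 0" "cycle4_matrix a b c d b a = 0"
    "cycle4_matrix a b c d c d = 0" "cycle4_matrix a b c d d c = 0"
  using assms unfolding cycle4_matrix_def by (simp_all add: doubleton_eq_iff)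

lemma cycle4_matrix_outside:
  assumes "i \<notin> {a, b, c, d} \<or> j \<notin> {a, b, c, d}"
  shows "cycle4_matrix a b c d i j = 0"
proof -
  have "{i, j} \<noteq> {a, c}" "{i, j} \<noteq> {a, d}" "{i, j} \<noteq> {b, c}" "{i, j} \<noteq> {b, d}"
    using assms by blast+
  thus ?thesis using assms unfolding cycle4_matrix_def by auto
qed

lemma cycle4_matrix_offdiag_nonzero:
  assumes "i \<noteq> j" "cycle4_matrix a b c d i j \<noteq> 0"
  shows "{i, j} = {a, c} \<or> {i, j} = {a, d} \<or> {i, j} = {b, c} \<or> {i, j} = {b, d}"
proof (rule ccontr)
  assume "\<not> ?thesis"
  hence "cycle4_matrix a b c d i j = 0" using assms(1) unfolding cycle4_matrix_def by simp
  thus False using assms(2) by contradiction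
qed

lemma quad_form_cycle4_matrix:
  fixes f :: "real \<Rightarrow> real"
  assumes "distinct [a, b, c, d]" "a < n" "b < n" "c < n" "d < n" "f 0 = 0"
  shows "quad_form n (\<lambda>i j. f (cycle4_matrix a b c d i j)) x
    = f (sqrt 2) * ((x a)\<^sup>2 + (x b)\<^sup>2 + (x c)\<^sup>2 + (x d)\<^sup>2)
      + 2 * f 1 * (x a * x c + x a * x d + x b * x c) + 2 * f (-1) * (x b * x d)"
proof -
  have "quad_form n (\<lambda>i j. f (cycle4_matrix a b c d i j)) x
      = (\<Sum>i\<in>{a, b, c, d}. \<Sum>j\<in>{a, b, c, d}. x i * f (cycle4_matrix a b c d i j) * x j)"
    using assms cycle4_matrix_outside by (intro quad_form_eq_sum_support) auto
  thus ?thesis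
    using assms(1,6) by (simp add: cycle4_matrix_entries algebra_simps power2_eq_square)
qed

lemma psd_cycle4_matrix:
  assumes "distinct [a, b, c, d]" "a < n" "b < n" "c < n" "d < n"
  shows "psd n (cycle4_matrix a b c d)"
  unfolding psd_iff_quad_form
proof (intro conjI allI impI)
  fix i j show "cycle4_matrix a b c d i j = cycle4_matrix a b c d j i"
    unfolding cycle4_matrix_def by (simp add: insert_commute)
next
  fix x
  have Q: "quad_form n (cycle4_matrix a b c d) x
      = sqrt 2 * ((x a)\<^sup>2 + (x b)\<^sup>2 + (x c)\<^sup>2 + (x d)\<^sup>2) + 2 * (x a * x c + x a * x d + x b * x c)
        - 2 * (x b * x d)"
    using quad_form_cycle4_matrix[OF assms, where f = "\<lambda>t. t"] by simp
  have "sqrt 2 * quad_form n (cycle4_matrix a b c d) x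
      = (sqrt 2 * x a + x c + x d)\<^sup>2 + (sqrt 2 * x b + x c - x d)\<^sup>2"
    unfolding Q by (simp add: algebra_simps power2_eq_square)
  hence "0 \<le> sqrt 2 * quad_form n (cycle4_matrix a b c d) x" by simp
  thus "0 \<le> quad_form n (cycle4_matrix a b c d) x" by (simp add: zero_le_mult_iff)
qed

lemma cycle4_matrix_phi_pow_not_psd:
  assumes "distinct [a, b, c, d]" "a < n" "b < n" "c < n" "d < n" "\<alpha> < 2"
  shows "\<not> psd n (\<lambda>i j. phi_pow \<alpha> (cycle4_matrix a b c d i j))"
proof -
  have "sqrt 2 powr \<alpha> < sqrt 2 powr 2"
    using powr_less_mono[OF \<open>\<alpha> < 2\<close>, of "sqrt 2"] by simp
  hence "sqrt 2 powr \<alpha> < 2" by (simp add: powr_numeral)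
  define x :: "nat \<Rightarrow> real" where "x i = (if i = a \<or> i = b then 1 else - 1)" for i
  have "quad_form n (\<lambda>i j. phi_pow \<alpha> (cycle4_matrix a b c d i j)) x = 4 * sqrt 2 powr \<alpha> - 8"
    using quad_form_cycle4_matrix[OF assms(1-5), where f = "phi_pow \<alpha>"] assms(1)
    by (simp add: x_def phi_pow_def)
  also have "\<dots> < 0" using \<open>sqrt 2 powr \<alpha> < 2\<close> by simp
  finally show ?thesis unfolding psd_iff_quad_form by (meson not_le)
qed

lemma reachable_from_edge_or_cherry:
  assumes r: "(adj G)\<^sup>*\<^sup>* a c" and ab: "adj G a b" and sg: "simple_graph G"
  shows "c = a \<or> c = b \<or> (\<exists>u v w. u \<noteq> w \<and> adj G v u \<and> adj G v w)"
  using r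
proof (induction rule: rtranclp_induct)
  case base thus ?case by simp
next
  case (step y z)
  have ba: "adj G b a" using ab sg unfolding simple_graph_def by blast
  from step.IH show ?case
  proof (elim disjE)
    assume "y = a" thus ?thesis using step.hyps(2) ab by (cases "z = b") blast+
  next
    assume "y = b" thus ?thesis using step.hyps(2) ba by (cases "z = a") blast+
  qed blast
qed

lemma connected_graph_has_cherry:
  assumes sg: "simple_graph G" and cg: "connected_graph G" and n3: "nverts G \<ge> 3"
  shows "\<exists>u v w. u \<noteq> w \<and> adj G v u \<and> adj G v w"
proof -
  have cc: "\<And>i j. i < nverts G \<Longrightarrow> j < nverts G \<Longrightarrow> (adj G)\<^sup>*\<^sup>* i j"
    using cg unfolding connected_graph_def by blast
  have "(adj G)\<^sup>*\<^sup>* 0 1" using cc n3 by simp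
  hence "\<exists>b. adj G 0 b" by (metis converse_rtranclpE zero_neq_one)
  then obtain b where ab: "adj G 0 b" by blast
  define c :: nat where "c = (if b = 1 then 2 else 1)"
  have "c < nverts G" using n3 by (simp add: c_def)
  hence "(adj G)\<^sup>*\<^sup>* 0 c" using cc n3 by simp
  from reachable_from_edge_or_cherry[OF this ab sg]
  have "c = 0 \<or> c = b \<or> (\<exists>u v w. u \<noteq> w \<and> adj G v u \<and> adj G v w)" .
  moreover have "c \<noteq> 0" "c \<noteq> b" by (auto simp: c_def)
  ultimately show ?thesis by simp
qed

lemma bipartite_graph_triangle_free:
  assumes "bipartite_graph G"
  shows "\<not> (adj G i p \<and> adj G i q \<and> adj G p q)"
proof
  obtain c :: "nat \<Rightarrow> bool" where "\<And>i j. adj G i j \<Longrightarrow> c i \<noteq> c j"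
    using assms unfolding bipartite_graph_def by blast
  moreover assume "adj G i p \<and> adj G i q \<and> adj G p q"
  ultimately have "c i \<noteq> c p" "c i \<noteq> c q" "c p \<noteq> c q" by blast+
  thus False by (cases "c i"; cases "c p"; cases "c q") auto
qed

lemma PG_psd: "A \<in> PG G I \<Longrightarrow> psd (nverts G) A"
  unfolding PG_def by auto

lemma PG_offdiag_nonzero_imp_adj:
  "A \<in> PG G I \<Longrightarrow> i < nverts G \<Longrightarrow> j < nverts G \<Longrightarrow> i \<noteq> j \<Longrightarrow> A i j \<noteq> 0 \<Longrightarrow> adj G i j"
  unfolding PG_def by auto

lemma PG_UNIV_intro:
  assumes "psd (nverts G) B" "\<And>i j. A i j = 0 \<Longrightarrow> B i j = 0" "A \<in> PG G I"
  shows "B \<in> PG G UNIV"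
  using assms unfolding PG_def by auto

lemma PG_cong:
  assumes "A \<in> PG G I" "\<And>i j. i < nverts G \<Longrightarrow> j < nverts G \<Longrightarrow> B i j = A i j"
  shows "B \<in> PG G I"
proof -
  have "(\<Sum>i<nverts G. \<Sum>j<nverts G. x i * B i j * x j) = (\<Sum>i<nverts G. \<Sum>j<nverts G. x i * A i j * x j)"
    for x by (intro sum.cong refl) (simp add: assms(2))
  thus ?thesis using assms unfolding PG_def psd_def by auto
qed

lemma HG_powr_in_PG: "\<alpha> \<in> HG G \<Longrightarrow> A \<in> PG G {0..} \<Longrightarrow> (\<lambda>i j. A i j powr \<alpha>) \<in> PG G UNIV"
  unfolding HG_def by blast

lemma HG_phi_pow_in_PG: "\<alpha> \<in> HG_phi G \<Longrightarrow> A \<in> PG G UNIV \<Longrightarrow> (\<lambda>i j. phi_pow \<alpha> (A i j)) \<in> PG G UNIV"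
  unfolding HG_phi_def by blast

lemma HG_psi_pow_in_PG: "\<alpha> \<in> HG_psi G \<Longrightarrow> A \<in> PG G UNIV \<Longrightarrow> (\<lambda>i j. psi_pow \<alpha> (A i j)) \<in> PG G UNIV"
  unfolding HG_psi_def by blast

lemma PG_nonneg_in_PG_UNIV: "A \<in> PG G {0..} \<Longrightarrow> A \<in> PG G UNIV"
  unfolding PG_def by blast

lemma HG_if_entrywise_map_preserves_PG:
  fixes f :: "real \<Rightarrow> real"
  assumes f_nonneg: "\<And>t. 0 \<le> t \<Longrightarrow> f t = t powr \<alpha>"
    and preserves: "\<And>A. A \<in> PG G UNIV \<Longrightarrow> (\<lambda>i j. f (A i j)) \<in> PG G UNIV"
  shows "\<alpha> \<in> HG G"
  unfolding HG_def
proof (intro CollectI ballI)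
  fix A assume A: "A \<in> PG G {0..}"
  from preserves[OF PG_nonneg_in_PG_UNIV[OF A]]
  show "(\<lambda>i j. A i j powr \<alpha>) \<in> PG G UNIV"
  proof (rule PG_cong)
    fix i j assume "i < nverts G" "j < nverts G"
    hence "A i j \<ge> 0" using A unfolding PG_def by auto
    thus "A i j powr \<alpha> = f (A i j)" using f_nonneg by simp
  qed
qed

lemma HG_phi_subset_HG: "HG_phi G \<subseteq> HG G"
proof (intro subsetI HG_if_entrywise_map_preserves_PG)
  show "phi_pow \<alpha> t = t powr \<alpha>" if "0 \<le> t" for \<alpha> t
    using that by (simp add: phi_pow_def)
qed (rule HG_phi_pow_in_PG)

lemma HG_psi_subset_HG: "HG_psi G \<subseteq> HG G"
proof (intro subsetI HG_if_entrywise_map_preserves_PG)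
  show "psi_pow \<alpha> t = t powr \<alpha>" if "0 \<le> t" for \<alpha> t
    using that by (cases "t = 0") (simp_all add: psi_pow_def)
qed (rule HG_psi_pow_in_PG)

lemma HG_if_ge_1:
  assumes "bipartite_graph G" "1 \<le> \<alpha>"
  shows "\<alpha> \<in> HG G"
  unfolding HG_def
proof (intro CollectI ballI)
  fix A assume A: "A \<in> PG G {0..}"
  obtain c :: "nat \<Rightarrow> bool" where c: "\<And>i j. adj G i j \<Longrightarrow> c i \<noteq> c j"
    using assms(1) unfolding bipartite_graph_def by blast
  have "psd (nverts G) (\<lambda>i j. A i j powr \<alpha>)"
  proof (rule psd_entrywise_powr_bipartite_nonneg[OF PG_psd[OF A] _ _ assms(2), of c])
    fix i j assume "i < nverts G" "j < nverts G"
    thus "A i j \<ge> 0" using A unfolding PG_def by auto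
  next
    fix i j assume "i < nverts G" "j < nverts G" "i \<noteq> j" "A i j \<noteq> 0"
    thus "c i \<noteq> c j" using c PG_offdiag_nonzero_imp_adj[OF A] by blast
  qed
  thus "(\<lambda>i j. A i j powr \<alpha>) \<in> PG G UNIV" by (rule PG_UNIV_intro[OF _ _ A]) simp
qed

lemma entrywise_in_PG_if_abs_eq_powr:
  fixes f :: "real \<Rightarrow> real"
  assumes "bipartite_graph G" "2 \<le> \<alpha>" "A \<in> PG G UNIV"
    and f_abs: "\<And>t. \<bar>f t\<bar> = \<bar>t\<bar> powr \<alpha>" and f_nonneg: "\<And>t. 0 \<le> t \<Longrightarrow> f t = t powr \<alpha>"
  shows "(\<lambda>i j. f (A i j)) \<in> PG G UNIV"
proof -
  have psd: "psd (nverts G) A" using PG_psd[OF assms(3)] .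
  have "psd (nverts G) (\<lambda>i j. f (A i j))"
  proof (rule psd_entrywise_powr_triangle_free[OF psd])
    show "\<And>i j. i < nverts G \<Longrightarrow> j < nverts G \<Longrightarrow> i \<noteq> j \<Longrightarrow> A i j \<noteq> 0 \<Longrightarrow> adj G i j"
      using PG_offdiag_nonzero_imp_adj[OF assms(3)] .
    show "\<And>i p q. \<not> (adj G i p \<and> adj G i q \<and> adj G p q)"
      using bipartite_graph_triangle_free[OF assms(1)] .
    show "\<And>i j. i < nverts G \<Longrightarrow> j < nverts G \<Longrightarrow> f (A i j) = f (A j i)"
      using psd unfolding psd_def by auto
    show "\<And>i j. \<bar>f (A i j)\<bar> = \<bar>A i j\<bar> powr \<alpha>"
      by (rule f_abs)
    show "\<And>i. i < nverts G \<Longrightarrow> f (A i i) = A i i powr \<alpha>"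
      using psd_diag_nonneg[OF psd] f_nonneg by blast
  qed (rule assms(2))
  moreover have "f 0 = 0" using f_nonneg[of 0] by simp
  ultimately show ?thesis by (intro PG_UNIV_intro[OF _ _ assms(3)]) auto
qed

lemma HG_phi_if_ge_2:
  assumes "bipartite_graph G" "2 \<le> \<alpha>"
  shows "\<alpha> \<in> HG_phi G"
  unfolding HG_phi_def
  using entrywise_in_PG_if_abs_eq_powr[OF assms, of _ "phi_pow \<alpha>"] by (simp add: phi_pow_def)

lemma HG_psi_if_ge_2:
  assumes "bipartite_graph G" "2 \<le> \<alpha>"
  shows "\<alpha> \<in> HG_psi G"
proof -
  have "\<bar>psi_pow \<alpha> t\<bar> = \<bar>t\<bar> powr \<alpha>" for t
    by (cases "t = 0") (simp_all add: psi_pow_def abs_mult abs_sgn_eq)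
  moreover have "psi_pow \<alpha> t = t powr \<alpha>" if "0 \<le> t" for t
    using that by (cases "t = 0") (simp_all add: psi_pow_def)
  ultimately show ?thesis
    unfolding HG_psi_def using entrywise_in_PG_if_abs_eq_powr[OF assms] by blast
qed

lemma one_in_HG_psi: "1 \<in> HG_psi G"
proof -
  have "psi_pow 1 t = t" for t by (cases "t = 0") (auto simp: psi_pow_def sgn_if)
  thus ?thesis unfolding HG_psi_def by simp
qed

lemma HG_subset_ge_1:
  assumes "simple_graph G" "connected_graph G" "nverts G \<ge> 3"
  shows "HG G \<subseteq> {1..}"
proof
  fix \<alpha> assume \<alpha>: "\<alpha> \<in> HG G"
  obtain u v w where "u \<noteq> w" and vu: "adj G v u" and vw: "adj G v w"
    using connected_graph_has_cherry[OF assms] by blast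
  have edge: "i < nverts G \<and> j < nverts G \<and> i \<noteq> j \<and> adj G j i" if "adj G i j" for i j
    using assms(1) that unfolding simple_graph_def by blast
  have uvw: "distinct [u, v, w]" "u < nverts G" "v < nverts G" "w < nverts G"
    using \<open>u \<noteq> w\<close> edge[OF vu] edge[OF vw] by auto
  have "adj G i j" if "i \<noteq> j" "path3_matrix u v w i j \<noteq> 0" for i j
    using path3_matrix_offdiag_nonzero[OF that] vu vw edge[OF vu] edge[OF vw]
    by (auto simp: doubleton_eq_iff)
  hence "path3_matrix u v w \<in> PG G {0..}"
    unfolding PG_def using psd_path3_matrix[OF uvw] path3_matrix_nonneg by auto
  hence "psd (nverts G) (\<lambda>i j. path3_matrix u v w i j powr \<alpha>)"
    using HG_powr_in_PG[OF \<alpha>] PG_psd by blast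
  thus "\<alpha> \<in> {1..}" using path3_matrix_powr_not_psd[OF uvw] by (cases "\<alpha> < 1") auto
qed

lemma HG_phi_subset_ge_2:
  assumes "subgraph_of (K_bip 2 2) G"
  shows "HG_phi G \<subseteq> {2..}"
proof
  fix \<alpha> assume \<alpha>: "\<alpha> \<in> HG_phi G"
  obtain f where inj: "inj_on f {..<4}" and range: "f ` {..<4} \<subseteq> {..<nverts G}"
    and edge: "\<And>i j. adj (K_bip 2 2) i j \<Longrightarrow> adj G (f i) (f j)"
    using assms unfolding subgraph_of_def by (auto simp: K_bip_def nverts_def)
  have K22: "adj (K_bip 2 2) i j \<longleftrightarrow> i < 4 \<and> j < 4 \<and> ((i < 2 \<and> 2 \<le> j) \<or> (j < 2 \<and> 2 \<le> i))" for i j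
    by (simp add: K_bip_def adj_def)
  have "f i \<noteq> f j" if "i < 4" "j < 4" "i \<noteq> j" for i j
    using inj that unfolding inj_on_def by blast
  moreover have "f i < nverts G" if "i < 4" for i
    using range that by auto
  ultimately have abcd: "distinct [f 0, f 1, f 2, f 3]"
    "f 0 < nverts G" "f 1 < nverts G" "f 2 < nverts G" "f 3 < nverts G"
    by auto
  have "adj G (f 0) (f 2)" "adj G (f 2) (f 0)" "adj G (f 0) (f 3)" "adj G (f 3) (f 0)"
    "adj G (f 1) (f 2)" "adj G (f 2) (f 1)" "adj G (f 1) (f 3)" "adj G (f 3) (f 1)"
    by (rule edge, simp add: K22)+
  hence "adj G i j" if "i \<noteq> j" "cycle4_matrix (f 0) (f 1) (f 2) (f 3) i j \<noteq> 0" for i j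
    using cycle4_matrix_offdiag_nonzero[OF that] by (auto simp: doubleton_eq_iff)
  hence "cycle4_matrix (f 0) (f 1) (f 2) (f 3) \<in> PG G UNIV"
    unfolding PG_def using psd_cycle4_matrix[OF abcd] by auto
  hence "psd (nverts G) (\<lambda>i j. phi_pow \<alpha> (cycle4_matrix (f 0) (f 1) (f 2) (f 3) i j))"
    using HG_phi_pow_in_PG[OF \<alpha>] PG_psd by blast
  thus "\<alpha> \<in> {2..}" using cycle4_matrix_phi_pow_not_psd[OF abcd] by (cases "\<alpha> < 2") auto
qed

theorem theorem4p10:
  fixes G :: graph
  assumes "simple_graph G" and "connected_graph G" and "bipartite_graph G"
    and "nverts G \<ge> 3"
  shows "HG G = {1..} \<and>
         {2..} \<subseteq> HG_phi G \<and> HG_phi G \<subseteq> {1..} \<and>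
         {1} \<union> {3..} \<subseteq> HG_psi G \<and> HG_psi G \<subseteq> {1..} \<and>
         (\<forall>m::nat. m \<ge> 2 \<and> subgraph_of (K_bip 2 2) G \<and> subgraph_of G (K_bip 2 m) \<longrightarrow>
           HG_phi G = {2..} \<and> {1} \<union> {2..} \<subseteq> HG_psi G \<and> HG_psi G \<subseteq> {1..})"
proof -
  have HG: "HG G = {1..}"
    using HG_subset_ge_1[OF assms(1,2,4)] HG_if_ge_1[OF assms(3)] by auto
  have phi: "{2..} \<subseteq> HG_phi G" "HG_phi G \<subseteq> {1..}"
    using HG_phi_if_ge_2[OF assms(3)] HG_phi_subset_HG[of G] HG by auto
  have psi: "{1} \<union> {2..} \<subseteq> HG_psi G" "HG_psi G \<subseteq> {1..}"
    using HG_psi_if_ge_2[OF assms(3)] one_in_HG_psi HG_psi_subset_HG[of G] HG by auto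
  have "HG_phi G = {2..}" if "subgraph_of (K_bip 2 2) G"
    using HG_phi_subset_ge_2[OF that] phi(1) by blast
  with HG phi psi show ?thesis by auto
qed

end
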